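(* Let $\mathfrak{sl}_2$ have basis $H,X,Y$ with $[H,X]=2X$, $[H,Y]=-2Y$, $[X,Y]=H$. For $k\in\mathbb{C}$ let $V_k$ be the Verma module with highest weight vector $v_k$ ($Xv_k=0$, $Hv_k=kv_k$, basis $Y^lv_k$, $l\ge0$). Let $N\ge1$, $k_1,\dots,k_N\in\mathbb{C}$, $b\ne0$, $\Lambda\in\mathbb{C}$, $m\ge 1$, and $v=v_{k_1}\otimes\cdots\otimes v_{k_N}\in V_{k_1}\otimes\cdots\otimes V_{k_N}$. For an operator $g\in\mathfrak{sl}_2$ let $g_a$ denote $g$ acting on the $a$-th tensor factor, and set $\Omega_{ab}=\tfrac12H_aH_b+X_aY_b+Y_aX_b$. Define $$\phi_0(z)=\exp\Big(-\frac{\Lambda}{2b^2}\sum_{a=1}^Nk_az_a\Big)\prod_{a<b}(z_a-z_b)^{-\frac{k_ak_b}{2b^2}},\qquad F(z,w)=e^{\frac{\Lambda w}{b^2}}\prod_{a=1}^N(w-z_a)^{\frac{k_a}{b^2}}\sum_{a=1}^N\frac{Y_a}{w-z_a},$$ $$\rho(w_1,\dots,w_m)=\prod_{1\le p<q\le m}(w_p-w_q)^{-\frac{2}{b^2}},\qquad \Psi(z)=\phi_0(z)\int_\Gamma\rho(\mathbf w)F(z,w_1)F(z,w_2)\cdots F(z,w_m)\,v\;d^m\mathbf w,$$ for an admissible cycle $\Gamma$. Then for every $i=1,\dots,N$, $$-b^2\frac{\partial\Psi}{\partial z_i}=\Big(\frac{\Lambda}{2}H_i+\sum_{j\ne i}\frac{\Omega_{ij}}{z_i-z_j}\Big)\Psi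 .$$ Equivalently, writing $\Psi=\phi_0\sum_{\mathbf m}\phi^{(\mathbf m)}\,Y_1^{m_1}\cdots Y_N^{m_N}v$ (sum over $\mathbf m=(m_1,\dots,m_N)\in\mathbb{Z}_{\ge0}^N$ with $\sum m_a=m$), the coefficients satisfy $-b^2\partial_i\phi^{(\mathbf m)}=-\Lambda m_i\phi^{(\mathbf m)}+(\text{terms coming from }\sum_{j\neq i}\Omega_{ij}/(z_i-z_j))$, where $H_iY_1^{m_1}\cdots Y_N^{m_N}v=(k_i-2m_i)Y_1^{m_1}\cdots Y_N^{m_N}v$.
   Context: The $Y_a$ commute with each other, so the product of the $F$'s is well defined; $\Psi$ takes values in the finite-dimensional subspace of $V_{k_1}\otimes\cdots\otimes V_{k_N}$ spanned by $Y_1^{m_1}\cdots Y_N^{m_N}v$ with $\sum m_a=m$ (the "height $m$" subspace). The integrand is multivalued; a branch is fixed along $\Gamma$. "Admissible cycle" means: $\Gamma$ is a (possibly non-compact) $m$-dimensional cycle in $\mathbf w=(w_1,\dots,w_m)$-space, locally constant in $z$, such that all integrals converge, $z$-derivatives may be taken under the integral, and integrals over $\Gamma$ of $\partial/\partial w_p$ of $\rho\prod_q e^{\Lambda w_q/b^2}\prod_{q,a}(w_q-z_a)^{k_a/b^2}$ times any rational function with poles only at $w_q=z_a$ vanish. The equation is the degree-one irregular KZ equation at level $\kappa=-b^2$. *)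

theory Defs
  imports "HOL-Analysis.Analysis"
begin

text \<open>Tensor factors are indexed by a < N (0-based), integration
variables by p < m (0-based). A vector of the height-graded part of
V_{k_1} (x) ... (x) V_{k_N} is represented by its coefficient function
c :: (nat => nat) => complex, standing for sum_n c n * Y_1^{n_1} ... Y_N^{n_N} v.\<close>

type_synonym vec = "(nat \<Rightarrow> nat) \<Rightarrow> complex"

text \<open>Action of sl2 on the a-th Verma factor, written out on the basis
Y^l v_k:  Y e_l = e_{l+1},  H e_l = (k - 2l) e_l,  X e_l = l (k - l + 1) e_{l-1}.\<close>

definition Yop :: "nat \<Rightarrow> vec \<Rightarrow> vec" where
  "Yop a c = (\<lambda>n. if n a = 0 then 0 else c (n(a := n a - 1)))"

definition Hop :: "(nat \<Rightarrow> complex) \<Rightarrow> nat \<Rightarrow> vec \<Rightarrow> vec" where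
  "Hop k a c = (\<lambda>n. (k a - 2 * of_nat (n a)) * c n)"

definition Xop :: "(nat \<Rightarrow> complex) \<Rightarrow> nat \<Rightarrow> vec \<Rightarrow> vec" where
  "Xop k a c = (\<lambda>n. of_nat (n a + 1) * (k a - of_nat (n a)) * c (n(a := n a + 1)))"

definition Omega :: "(nat \<Rightarrow> complex) \<Rightarrow> nat \<Rightarrow> nat \<Rightarrow> vec \<Rightarrow> vec" where
  "Omega k a b c = (\<lambda>n. (1/2) * Hop k a (Hop k b c) n + Xop k a (Yop b c) n + Yop a (Xop k b c) n)"

definition hw_vec :: vec where
  "hw_vec = (\<lambda>n. if n = (\<lambda>_. 0) then 1 else 0)"

text \<open>The operator sum_a Y_a / (x - z_a) and the product
F(z,w_0) ... F(z,w_{m-1}) v with all scalar factors removed (they are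
collected, together with rho, into the fixed branch Phi).\<close>
definition Fsum :: "nat \<Rightarrow> (nat \<Rightarrow> complex) \<Rightarrow> complex \<Rightarrow> vec \<Rightarrow> vec" where
  "Fsum N z x c = (\<lambda>n. \<Sum>a<N. Yop a c n / (x - z a))"

definition Fprod :: "nat \<Rightarrow> nat \<Rightarrow> (nat \<Rightarrow> complex) \<Rightarrow> (nat \<Rightarrow> complex) \<Rightarrow> vec" where
  "Fprod N m z w = foldr (\<lambda>p c. Fsum N z (w p) c) [0..<m] hw_vec"

definition pd :: "nat \<Rightarrow> ((nat \<Rightarrow> complex) \<Rightarrow> complex) \<Rightarrow> (nat \<Rightarrow> complex) \<Rightarrow> complex" where
  "pd i f x = deriv (\<lambda>t. f (x(i := t))) (x i)"

inductive_set ratfun :: "nat \<Rightarrow> nat \<Rightarrow> (nat \<Rightarrow> complex) \<Rightarrow> ((nat \<Rightarrow> complex) \<Rightarrow> complex) set"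
  for N m :: nat and z :: "nat \<Rightarrow> complex" where
  const: "(\<lambda>w. c) \<in> ratfun N m z"
| coord: "q < m \<Longrightarrow> (\<lambda>w. w q) \<in> ratfun N m z"
| pole: "q < m \<Longrightarrow> a < N \<Longrightarrow> (\<lambda>w. 1 / (w q - z a)) \<in> ratfun N m z"
| add: "f \<in> ratfun N m z \<Longrightarrow> g \<in> ratfun N m z \<Longrightarrow> (\<lambda>w. f w + g w) \<in> ratfun N m z"
| mult: "f \<in> ratfun N m z \<Longrightarrow> g \<in> ratfun N m z \<Longrightarrow> (\<lambda>w. f w * g w) \<in> ratfun N m z"

text \<open>Same, with coefficients allowed to be polynomial in z (for
differentiation in z under the integral).\<close>
inductive_set ratfunz :: "nat \<Rightarrow> nat \<Rightarrow> ((nat \<Rightarrow> complex) \<Rightarrow> (nat \<Rightarrow> complex) \<Rightarrow> complex) set"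
  for N m :: nat where
  const: "(\<lambda>z w. c) \<in> ratfunz N m"
| wcoord: "q < m \<Longrightarrow> (\<lambda>z w. w q) \<in> ratfunz N m"
| zcoord: "a < N \<Longrightarrow> (\<lambda>z w. z a) \<in> ratfunz N m"
| pole: "q < m \<Longrightarrow> a < N \<Longrightarrow> (\<lambda>z w. 1 / (w q - z a)) \<in> ratfunz N m"
| add: "f \<in> ratfunz N m \<Longrightarrow> g \<in> ratfunz N m \<Longrightarrow> (\<lambda>z w. f z w + g z w) \<in> ratfunz N m"
| mult: "f \<in> ratfunz N m \<Longrightarrow> g \<in> ratfunz N m \<Longrightarrow> (\<lambda>z w. f z w * g z w) \<in> ratfunz N m"

text \<open>phi0 is a branch of
exp(-Lam/(2b^2) sum_a k_a z_a) prod_{a<c} (z_a - z_c)^(-k_a k_c/(2 b^2)) on Zs,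
characterised by its logarithmic partial derivatives.\<close>
definition phi0_branch ::
  "nat \<Rightarrow> (nat \<Rightarrow> complex) \<Rightarrow> complex \<Rightarrow> complex \<Rightarrow> (nat \<Rightarrow> complex) set \<Rightarrow> ((nat \<Rightarrow> complex) \<Rightarrow> complex) \<Rightarrow> bool" where
  "phi0_branch N k b Lam Zs phi0 \<longleftrightarrow>
     (\<forall>z\<in>Zs. \<forall>i<N.
        ((\<lambda>t. phi0 (z(i := t))) has_field_derivative
           phi0 z * (- Lam * k i / (2 * b^2) - (\<Sum>j\<in>{..<N} - {i}. k i * k j / (2 * b^2 * (z i - z j)))))
        (at (z i)))"

text \<open>Phi z w is the branch, fixed along the cycle (support G), of
rho(w) prod_p [ exp(Lam w_p / b^2) prod_a (w_p - z_a)^(k_a/b^2) ],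
characterised by its logarithmic partial derivatives in all variables.\<close>
definition master_branch ::
  "nat \<Rightarrow> nat \<Rightarrow> (nat \<Rightarrow> complex) \<Rightarrow> complex \<Rightarrow> complex \<Rightarrow> (nat \<Rightarrow> complex) set \<Rightarrow> (nat \<Rightarrow> complex) set
   \<Rightarrow> ((nat \<Rightarrow> complex) \<Rightarrow> (nat \<Rightarrow> complex) \<Rightarrow> complex) \<Rightarrow> bool" where
  "master_branch N m k b Lam Zs G Phi \<longleftrightarrow>
     (\<forall>z\<in>Zs. \<forall>w\<in>G.
        (\<forall>p<m. \<forall>a<N. w p \<noteq> z a) \<and>
        (\<forall>p<m. \<forall>q<m. p \<noteq> q \<longrightarrow> w p \<noteq> w q) \<and>
        (\<forall>p<m. ((\<lambda>t. Phi z (w(p := t))) has_field_derivative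
            Phi z w * (Lam / b^2 + (\<Sum>a<N. k a / (b^2 * (w p - z a)))
                        - (\<Sum>q\<in>{..<m} - {p}. 2 / (b^2 * (w p - w q))))) (at (w p))) \<and>
        (\<forall>a<N. ((\<lambda>t. Phi (z(a := t)) w) has_field_derivative
            Phi z w * (- (\<Sum>p<m. k a / (b^2 * (w p - z a))))) (at (z a))))"

text \<open>An admissible cycle with support G, valid for all z in Zs, given through
its integration functional intg (intg f = integral over the cycle of f(w) d^m w).\<close>
definition admissible_cycle ::
  "nat \<Rightarrow> nat \<Rightarrow> (nat \<Rightarrow> complex) set \<Rightarrow> (nat \<Rightarrow> complex) set
   \<Rightarrow> ((nat \<Rightarrow> complex) \<Rightarrow> (nat \<Rightarrow> complex) \<Rightarrow> complex) \<Rightarrow> (((nat \<Rightarrow> complex) \<Rightarrow> complex) \<Rightarrow> complex) \<Rightarrow> bool" where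
  "admissible_cycle N m Zs G Phi intg \<longleftrightarrow>
     (\<forall>f g. intg (\<lambda>w. f w + g w) = intg f + intg g) \<and>
     (\<forall>c f. intg (\<lambda>w. c * f w) = c * intg f) \<and>
     (\<forall>f g. (\<forall>w\<in>G. f w = g w) \<longrightarrow> intg f = intg g) \<and>
     (\<forall>R\<in>ratfunz N m. \<forall>z\<in>Zs. \<forall>i<N.
        ((\<lambda>t. intg (\<lambda>w. Phi (z(i := t)) w * R (z(i := t)) w)) has_field_derivative
           intg (\<lambda>w. pd i (\<lambda>z'. Phi z' w * R z' w) z)) (at (z i))) \<and>
     (\<forall>z\<in>Zs. \<forall>R\<in>ratfun N m z. \<forall>p<m.
        intg (\<lambda>w. pd p (\<lambda>w'. Phi z w' * R w') w) = 0)"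

definition Psi ::
  "nat \<Rightarrow> nat \<Rightarrow> ((nat \<Rightarrow> complex) \<Rightarrow> complex) \<Rightarrow> ((nat \<Rightarrow> complex) \<Rightarrow> (nat \<Rightarrow> complex) \<Rightarrow> complex)
   \<Rightarrow> (((nat \<Rightarrow> complex) \<Rightarrow> complex) \<Rightarrow> complex) \<Rightarrow> (nat \<Rightarrow> complex) \<Rightarrow> vec" where
  "Psi N m phi0 Phi intg z = (\<lambda>n. phi0 z * intg (\<lambda>w. Phi z w * Fprod N m z w n))"

end

theory Submission
  imports Defs
begin

text \<open>
  Let \<open>U\<close> be \<open>F(w\<^sub>1) \<cdots> F(w\<^sub>m) v\<close> with its scalar factors stripped and \<open>\<Phi>\<close> the master
  function (those factors times \<open>\<rho>\<close>). Pointwise in \<open>w\<close>, \<open>-b\<^sup>2 \<partial>\<^sub>z\<^sub>i(\<Phi> U)\<close> and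
  \<open>(\<Lambda>/2 H\<^sub>i + \<Sum>\<^sub>j \<Omega>\<^sub>i\<^sub>j/(z\<^sub>i - z\<^sub>j)) (\<Phi> U)\<close> differ by the total derivative
  \<open>b\<^sup>2 \<Sum>\<^sub>p \<partial>\<^sub>w\<^sub>p(\<Phi> Y\<^sub>i U\<^sub>p / (w\<^sub>p - z\<^sub>i))\<close>, where \<open>U\<^sub>p\<close> omits the factor \<open>F(w\<^sub>p)\<close>, and by
  \<open>c \<Phi> U\<close> with the constant \<open>c = \<Lambda>k\<^sub>i/2 + \<Sum>\<^sub>j k\<^sub>ik\<^sub>j/(2(z\<^sub>i - z\<^sub>j))\<close> by which these
  operators act on \<open>v\<close>. The total derivative integrates to zero over an admissible cycle,
  and \<open>c\<close> is \<open>-b\<^sup>2\<close> times the logarithmic \<open>z\<^sub>i\<close>-derivative of \<open>\<phi>\<^sub>0\<close>.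

  The pointwise identity is proved by induction on the number of factors \<open>F\<close>: commuting
  \<open>H\<^sub>i\<close> and \<open>\<Omega>\<^sub>i\<^sub>j\<close> past \<open>F(x)\<close> produces simple fractions in \<open>x\<close>, and the cross terms of
  two factors \<open>F(w\<^sub>p)\<close>, \<open>F(w\<^sub>q)\<close> cancel against the \<open>2/(w\<^sub>p - w\<^sub>q)\<close> terms of the
  logarithmic derivative of \<open>\<rho>\<close>.
\<close>

section \<open>The \<open>sl\<^sub>2\<close> action and the operators \<open>F\<close>\<close>

lemma Yop_commute: "Yop a (Yop b c) = Yop b (Yop a c)"
  by (auto simp: Yop_def fun_upd_twist intro!: ext)

lemma Hop_Yop: "Hop k a (Yop b c) n = Yop b (Hop k a c) n - (if a = b then 2 * Yop a c n else 0)"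
  by (auto simp: Yop_def Hop_def of_nat_diff algebra_simps)

lemma Xop_Yop: "Xop k a (Yop b c) n = Yop b (Xop k a c) n + (if a = b then Hop k a c n else 0)"
  by (cases "n b = 0") (auto simp: Yop_def Hop_def Xop_def of_nat_diff algebra_simps fun_upd_twist fun_upd_idem)

lemma Omega_Yop:
  assumes "i \<noteq> j"
  shows "Omega k i j (Yop a c) n = Yop a (Omega k i j c) n +
     (if a = i then Hop k i (Yop j c) n - Yop i (Hop k j c) n
      else if a = j then Yop i (Hop k j c) n - Hop k i (Yop j c) n else 0)"
  using assms
  by (cases "n a = 0"; cases "n i = 0"; cases "n j = 0")
     (auto simp: Omega_def Yop_def Hop_def Xop_def of_nat_diff algebra_simps fun_upd_twist fun_upd_idem)

lemma Yop_add [simp]: "Yop a (\<lambda>n. f n + g n) n = Yop a f n + Yop a g n"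
  by (simp add: Yop_def)
lemma Yop_diff [simp]: "Yop a (\<lambda>n. f n - g n) n = Yop a f n - Yop a g n"
  by (simp add: Yop_def)
lemma Yop_scale [simp]: "Yop a (\<lambda>n. c * f n) n = c * Yop a f n"
  by (simp add: Yop_def)
lemma Yop_div [simp]: "Yop a (\<lambda>n. f n / d) n = Yop a f n / d"
  by (simp add: Yop_def)
lemma Yop_zero [simp]: "Yop a (\<lambda>n. 0) n = 0"
  by (simp add: Yop_def)
lemma Yop_sum [simp]: "Yop a (\<lambda>n. \<Sum>x\<in>A. f x n) n = (\<Sum>x\<in>A. Yop a (f x) n)"
  by (simp add: Yop_def)

lemma Hop_add [simp]: "Hop k a (\<lambda>n. f n + g n) n = Hop k a f n + Hop k a g n"
  by (simp add: Hop_def algebra_simps)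
lemma Hop_diff [simp]: "Hop k a (\<lambda>n. f n - g n) n = Hop k a f n - Hop k a g n"
  by (simp add: Hop_def algebra_simps)
lemma Hop_scale [simp]: "Hop k a (\<lambda>n. c * f n) n = c * Hop k a f n"
  by (simp add: Hop_def algebra_simps)
lemma Hop_div [simp]: "Hop k a (\<lambda>n. f n / d) n = Hop k a f n / d"
  by (simp add: Hop_def)
lemma Hop_sum [simp]: "Hop k a (\<lambda>n. \<Sum>x\<in>A. f x n) n = (\<Sum>x\<in>A. Hop k a (f x) n)"
  by (simp add: Hop_def sum_distrib_left)

lemma Xop_add [simp]: "Xop k a (\<lambda>n. f n + g n) n = Xop k a f n + Xop k a g n"
  by (simp add: Xop_def algebra_simps)
lemma Xop_scale [simp]: "Xop k a (\<lambda>n. c * f n) n = c * Xop k a f n"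
  by (simp add: Xop_def algebra_simps)

lemma Omega_add [simp]: "Omega k i j (\<lambda>n. f n + g n) n = Omega k i j f n + Omega k i j g n"
proof -
  have "Hop k j (\<lambda>n. f n + g n) = (\<lambda>n. Hop k j f n + Hop k j g n)"
    "Yop j (\<lambda>n. f n + g n) = (\<lambda>n. Yop j f n + Yop j g n)"
    "Xop k j (\<lambda>n. f n + g n) = (\<lambda>n. Xop k j f n + Xop k j g n)"
    by (rule ext, simp)+
  then show ?thesis by (simp add: Omega_def algebra_simps)
qed

lemma Omega_scale [simp]: "Omega k i j (\<lambda>n. c * f n) n = c * Omega k i j f n"
proof -
  have "Hop k j (\<lambda>n. c * f n) = (\<lambda>n. c * Hop k j f n)"
    "Yop j (\<lambda>n. c * f n) = (\<lambda>n. c * Yop j f n)"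
    "Xop k j (\<lambda>n. c * f n) = (\<lambda>n. c * Xop k j f n)"
    by (rule ext, simp)+
  then show ?thesis by (simp add: Omega_def algebra_simps)
qed

lemma Omega_div [simp]: "Omega k i j (\<lambda>n. f n / d) n = Omega k i j f n / d"
  using Omega_scale[of k i j "1/d" f n] by simp

lemma Omega_sum [simp]: "Omega k i j (\<lambda>n. \<Sum>x\<in>A. f x n) n = (\<Sum>x\<in>A. Omega k i j (f x) n)"
  by (induction A rule: infinite_finite_induct) (simp_all add: Omega_scale[of k i j 0, simplified])

lemma Fsum_add [simp]: "Fsum N z x (\<lambda>n. f n + g n) n = Fsum N z x f n + Fsum N z x g n"
  by (simp add: Fsum_def add_divide_distrib sum.distrib)
lemma Fsum_diff [simp]: "Fsum N z x (\<lambda>n. f n - g n) n = Fsum N z x f n - Fsum N z x g n"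
  by (simp add: Fsum_def diff_divide_distrib sum_subtractf)
lemma Fsum_scale [simp]: "Fsum N z x (\<lambda>n. c * f n) n = c * Fsum N z x f n"
  by (simp add: Fsum_def sum_distrib_left)
lemma Fsum_div [simp]: "Fsum N z x (\<lambda>n. f n / d) n = Fsum N z x f n / d"
  by (simp add: Fsum_def sum_divide_distrib mult.commute)
lemma Fsum_sum [simp]: "Fsum N z x (\<lambda>n. \<Sum>y\<in>A. f y n) n = (\<Sum>y\<in>A. Fsum N z x (f y) n)"
  by (simp add: Fsum_def sum_divide_distrib sum.swap[of _ A])

lemma Fsum_Yop: "Fsum N z x (Yop a c) = Yop a (Fsum N z x c)"
proof (rule ext)
  fix n
  have "Yop a (Fsum N z x c) n = (\<Sum>b<N. Yop a (Yop b c) n / (x - z b))"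
    by (simp add: Fsum_def)
  then show "Fsum N z x (Yop a c) n = Yop a (Fsum N z x c) n"
    by (simp add: Fsum_def Yop_commute)
qed

lemma Fsum_commute: "Fsum N z x (Fsum N z y c) = Fsum N z y (Fsum N z x c)"
proof (rule ext)
  fix n
  have "Fsum N z x (Fsum N z y c) n = (\<Sum>a<N. \<Sum>b<N. Yop a (Yop b c) n / (y - z b) / (x - z a))"
    by (simp add: Fsum_def[of N z x] Fsum_def[of N z y] sum_divide_distrib)
  also have "\<dots> = (\<Sum>b<N. \<Sum>a<N. Yop b (Yop a c) n / (x - z a) / (y - z b))"
    by (subst sum.swap) (simp add: Yop_commute divide_simps mult.commute)
  also have "\<dots> = Fsum N z y (Fsum N z x c) n"
    by (simp add: Fsum_def[of N z x] Fsum_def[of N z y] sum_divide_distrib)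
  finally show "Fsum N z x (Fsum N z y c) n = Fsum N z y (Fsum N z x c) n" .
qed

lemma Hop_Fsum:
  "Hop k a (Fsum N z x c) n = Fsum N z x (Hop k a c) n - (if a < N then 2 * Yop a c n / (x - z a) else 0)"
proof -
  have "Hop k a (Fsum N z x c) n = (\<Sum>b<N. Hop k a (Yop b c) n / (x - z b))"
    by (simp add: Fsum_def)
  also have "\<dots> = (\<Sum>b<N. Yop b (Hop k a c) n / (x - z b)
      - (if b = a then 2 * Yop a c n / (x - z a) else 0))"
    by (rule sum.cong) (auto simp: Hop_Yop diff_divide_distrib)
  finally show ?thesis by (simp add: sum_subtractf Fsum_def)
qed

lemma Omega_Fsum:
  assumes "i \<noteq> j" "i < N" "j < N"
  shows "Omega k i j (Fsum N z x c) n = Fsum N z x (Omega k i j c) n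
     + (1 / (x - z i) - 1 / (x - z j)) * (Hop k i (Yop j c) n - Yop i (Hop k j c) n)"
proof -
  define E where "E = Hop k i (Yop j c) n - Yop i (Hop k j c) n"
  have "Omega k i j (Fsum N z x c) n = (\<Sum>b<N. Omega k i j (Yop b c) n / (x - z b))"
    by (simp add: Fsum_def)
  also have "\<dots> = (\<Sum>b<N. Yop b (Omega k i j c) n / (x - z b)
      + ((if b = i then E / (x - z i) else 0) + (if b = j then - E / (x - z j) else 0)))"
    by (rule sum.cong) (use assms in \<open>auto simp: Omega_Yop E_def add_divide_distrib\<close>)
  also have "\<dots> = Fsum N z x (Omega k i j c) n + (1 / (x - z i) - 1 / (x - z j)) * E"
    using assms by (simp add: sum.distrib Fsum_def algebra_simps)
  finally show ?thesis by (simp add: E_def)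
qed

lemma Xop_hw_vec [simp]: "Xop k a hw_vec n = 0"
proof -
  have "n(a := Suc (n a)) \<noteq> (\<lambda>_. 0)" by (metis fun_upd_same nat.distinct(1))
  then show ?thesis by (simp add: Xop_def hw_vec_def)
qed

lemma Hop_hw_vec: "Hop k a hw_vec = (\<lambda>n. k a * hw_vec n)"
  by (auto simp: Hop_def hw_vec_def)

lemma Omega_hw_vec: "i \<noteq> j \<Longrightarrow> Omega k i j hw_vec n = k i * k j / 2 * hw_vec n"
proof -
  have "Xop k a hw_vec = (\<lambda>n. 0)" for a by (simp add: fun_eq_iff)
  then show "i \<noteq> j \<Longrightarrow> ?thesis" by (simp add: Omega_def Xop_Yop Hop_hw_vec)
qed

section \<open>Products of \<open>F\<close> over finite index sets\<close>

definition Fprod_on :: "nat \<Rightarrow> (nat \<Rightarrow> complex) \<Rightarrow> (nat \<Rightarrow> complex) \<Rightarrow> nat set \<Rightarrow> vec" where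
  "Fprod_on N z w S = Finite_Set.fold (\<lambda>p. Fsum N z (w p)) hw_vec S"

interpretation Fsum_fold: comp_fun_commute "\<lambda>p. Fsum N z (w p)"
  by unfold_locales (auto simp: Fsum_commute)

lemma Fprod_on_empty [simp]: "Fprod_on N z w {} = hw_vec"
  by (simp add: Fprod_on_def)

lemma Fprod_on_insert:
  "finite S \<Longrightarrow> p \<notin> S \<Longrightarrow> Fprod_on N z w (insert p S) = Fsum N z (w p) (Fprod_on N z w S)"
  by (simp add: Fprod_on_def)

lemma Fprod_on_remove:
  "finite S \<Longrightarrow> p \<in> S \<Longrightarrow> Fprod_on N z w S = Fsum N z (w p) (Fprod_on N z w (S - {p}))"
  by (metis Fprod_on_insert finite_Diff insert_Diff Diff_iff insertI1)

lemma Fprod_on_insert_remove: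
  "finite S \<Longrightarrow> p \<notin> S \<Longrightarrow> q \<in> S \<Longrightarrow>
     Fprod_on N z w (insert p S - {q}) = Fsum N z (w p) (Fprod_on N z w (S - {q}))"
  by (metis Fprod_on_insert finite_Diff insert_Diff_if Diff_iff singletonD)

lemma Fprod_eq_Fprod_on: "Fprod N m z w = Fprod_on N z w {..<m}"
proof -
  have "distinct ps \<Longrightarrow> foldr (\<lambda>p. Fsum N z (w p)) ps hw_vec = Fprod_on N z w (set ps)" for ps
    by (induction ps) (simp_all add: Fprod_on_insert)
  from this[of "[0..<m]"] show ?thesis by (simp add: Fprod_def atLeast0LessThan)
qed

lemma Fprod_on_cong:
  "finite S \<Longrightarrow> (\<And>q. q \<in> S \<Longrightarrow> w q = w' q) \<Longrightarrow> Fprod_on N z w S = Fprod_on N z w' S"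
  by (induction S rule: finite_induct) (simp_all add: Fprod_on_insert)

lemma Hop_Fprod_on:
  assumes "finite S" "a < N"
  shows "Hop k a (Fprod_on N z w S) = (\<lambda>n. k a * Fprod_on N z w S n
     - 2 * (\<Sum>p\<in>S. Yop a (Fprod_on N z w (S - {p})) n / (w p - z a)))"
  using assms(1)
proof (induction S rule: finite_induct)
  case empty
  then show ?case by (simp add: Hop_hw_vec)
next
  case (insert p S)
  let ?F = "Fsum N z (w p)"
  show ?case
  proof (rule ext)
    fix n
    have "Hop k a (Fprod_on N z w (insert p S)) n
        = ?F (Hop k a (Fprod_on N z w S)) n - 2 * Yop a (Fprod_on N z w S) n / (w p - z a)"
      using insert assms by (simp add: Fprod_on_insert Hop_Fsum)
    also have "\<dots> = k a * ?F (Fprod_on N z w S) n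
        - 2 * (\<Sum>q\<in>S. Yop a (?F (Fprod_on N z w (S - {q}))) n / (w q - z a))
        - 2 * Yop a (Fprod_on N z w S) n / (w p - z a)"
      by (simp add: insert.IH Fsum_Yop)
    also have "\<dots> = k a * Fprod_on N z w (insert p S) n
        - 2 * (\<Sum>q\<in>insert p S. Yop a (Fprod_on N z w (insert p S - {q})) n / (w q - z a))"
      using insert by (simp add: Fprod_on_insert Fprod_on_insert_remove algebra_simps cong: sum.cong)
    finally show "Hop k a (Fprod_on N z w (insert p S)) n = k a * Fprod_on N z w (insert p S) n
        - 2 * (\<Sum>q\<in>insert p S. Yop a (Fprod_on N z w (insert p S - {q})) n / (w q - z a))" .
  qed
qed

section \<open>The algebraic identity behind the KZ equation\<close>

text \<open>Each \<open>\<Omega>\<^sub>i\<^sub>j\<close> acts on \<open>v\<close> by \<open>k\<^sub>ik\<^sub>j/2\<close>; the constants subtracted here are absorbed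
  by \<open>\<phi>\<^sub>0\<close>.\<close>
definition Omega_excess :: "nat \<Rightarrow> (nat \<Rightarrow> complex) \<Rightarrow> (nat \<Rightarrow> complex) \<Rightarrow> nat \<Rightarrow> vec \<Rightarrow> vec" where
  "Omega_excess N k z i c =
     (\<lambda>n. \<Sum>j\<in>{..<N} - {i}. (Omega k i j c n - k i * k j / 2 * c n) / (z i - z j))"

lemma KZ_operator_via_Omega_excess:
  "(Lam * k i / 2 + (\<Sum>j\<in>{..<N} - {i}. k i * k j / (2 * (z i - z j)))) * c n
     + (Lam / 2 * (Hop k i c n - k i * c n) + Omega_excess N k z i c n)
   = Lam / 2 * Hop k i c n + (\<Sum>j\<in>{..<N} - {i}. Omega k i j c n / (z i - z j))"
  by (simp add: Omega_excess_def algebra_simps sum_distrib_left sum_distrib_right diff_divide_distrib sum_subtractf)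

lemma Omega_excess_Fsum:
  assumes "i < N" "\<forall>j<N. j \<noteq> i \<longrightarrow> z j \<noteq> z i" "\<forall>a<N. x \<noteq> z a"
  shows "Omega_excess N k z i (Fsum N z x c) n = Fsum N z x (Omega_excess N k z i c) n
     + (\<Sum>j\<in>{..<N} - {i}. (Hop k i (Yop j c) n - Yop i (Hop k j c) n) / ((x - z i) * (x - z j)))"
proof -
  have "(Omega k i j (Fsum N z x c) n - k i * k j / 2 * Fsum N z x c n) / (z i - z j)
      = Fsum N z x (\<lambda>n. (Omega k i j c n - k i * k j / 2 * c n) / (z i - z j)) n
        + (Hop k i (Yop j c) n - Yop i (Hop k j c) n) / ((x - z i) * (x - z j))"
    if j: "j \<in> {..<N} - {i}" for j
  proof -
    define E where "E = Hop k i (Yop j c) n - Yop i (Hop k j c) n"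
    have "z i \<noteq> z j" "x \<noteq> z i" "x \<noteq> z j" using assms j by auto
    then have "(1 / (x - z i) - 1 / (x - z j)) * E / (z i - z j) = E / ((x - z i) * (x - z j))"
      by (simp add: divide_simps)
    moreover have "Omega k i j (Fsum N z x c) n
        = Fsum N z x (Omega k i j c) n + (1 / (x - z i) - 1 / (x - z j)) * E"
      using j assms(1) by (simp add: Omega_Fsum E_def)
    moreover have "(X + D - K) / d = (X - K) / d + D / d" for X D K d :: complex
      by (simp add: diff_divide_distrib add_divide_distrib)
    ultimately show ?thesis
      unfolding E_def[symmetric] by simp
  qed
  then show ?thesis
    unfolding Omega_excess_def by (simp add: sum.distrib)
qed

lemma Hop_Yop_commutator_Fprod_on:
  assumes "finite S" "i < N" "j < N" "i \<noteq> j"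
    and "x \<noteq> z i" "x \<noteq> z j" "\<forall>q\<in>S. w q \<noteq> z i \<and> w q \<noteq> z j"
  shows "(Hop k i (Yop j (Fprod_on N z w S)) n - Yop i (Hop k j (Fprod_on N z w S)) n) / ((x - z i) * (x - z j))
     = (k i * Yop j (Fprod_on N z w S) n - k j * Yop i (Fprod_on N z w S) n) / ((x - z i) * (x - z j))
       + (\<Sum>q\<in>S. Yop j (Yop i (Fprod_on N z w (S - {q}))) n
                 * (2 * (z j - z i) / ((x - z i) * (x - z j) * (w q - z i) * (w q - z j))))"
proof -
  let ?U = "Fprod_on N z w S"
  let ?Y = "\<lambda>q. Yop j (Yop i (Fprod_on N z w (S - {q}))) n"
  let ?C = "\<lambda>q. 1 / (w q - z i) - 1 / (w q - z j)"
  let ?D = "(x - z i) * (x - z j)"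
  have "Hop k i (Yop j ?U) n = k i * Yop j ?U n - 2 * (\<Sum>q\<in>S. ?Y q / (w q - z i))"
    using assms by (simp add: Hop_Yop Hop_Fprod_on)
  moreover have "Yop i (Hop k j ?U) n = k j * Yop i ?U n - 2 * (\<Sum>q\<in>S. ?Y q / (w q - z j))"
    using assms by (simp add: Hop_Fprod_on Yop_commute)
  ultimately have "Hop k i (Yop j ?U) n - Yop i (Hop k j ?U) n
      = k i * Yop j ?U n - k j * Yop i ?U n - 2 * (\<Sum>q\<in>S. ?Y q * ?C q)"
    by (simp add: right_diff_distrib sum_subtractf algebra_simps)
  then have "(Hop k i (Yop j ?U) n - Yop i (Hop k j ?U) n) / ?D
      = (k i * Yop j ?U n - k j * Yop i ?U n) / ?D + - 2 * (\<Sum>q\<in>S. ?Y q * ?C q) / ?D"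
    by (simp add: diff_divide_distrib)
  also have "- 2 * (\<Sum>q\<in>S. ?Y q * ?C q) / ?D = (\<Sum>q\<in>S. ?Y q * (- 2 * ?C q / ?D))"
    unfolding sum_distrib_left sum_divide_distrib by (rule sum.cong) (simp_all add: algebra_simps)
  also have "\<dots> = (\<Sum>q\<in>S. ?Y q * (2 * (z j - z i) / (?D * (w q - z i) * (w q - z j))))"
  proof (rule sum.cong[OF refl])
    fix q assume "q \<in> S"
    then have "- 2 * ?C q / ?D = 2 * (z j - z i) / (?D * (w q - z i) * (w q - z j))"
      using assms(5-7) by (auto simp: divide_simps)
    then show "?Y q * (- 2 * ?C q / ?D) = ?Y q * (2 * (z j - z i) / (?D * (w q - z i) * (w q - z j)))"
      by simp
  qed
  finally show ?thesis by (simp add: mult.assoc)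
qed

text \<open>The cross terms of two factors \<open>F(x)\<close>, \<open>F(y)\<close>: the \<open>\<Omega>\<close>-commutators produce the
  right-hand side, which recombines into the \<open>2/(x - y)\<close> terms that cancel against the
  logarithmic derivative of \<open>\<rho>\<close>.\<close>
lemma Yop_Fsum_pair:
  assumes "i < N" "x \<noteq> y" "\<forall>a<N. x \<noteq> z a \<and> y \<noteq> z a"
  shows "2 / (x - y) * (1 / (x - z i)) * Yop i (Fsum N z y c) n
       + 2 / (y - x) * (1 / (y - z i)) * Yop i (Fsum N z x c) n
     = (\<Sum>a\<in>{..<N} - {i}. Yop a (Yop i c) n
          * (2 * (z a - z i) / ((x - z i) * (x - z a) * (y - z i) * (y - z a))))"
proof -
  let ?Y = "\<lambda>a. Yop a (Yop i c) n"
  let ?T = "\<lambda>a. 2 / (x - y) * (1 / (x - z i)) * (1 / (y - z a))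
              + 2 / (y - x) * (1 / (y - z i)) * (1 / (x - z a))"
  have Yop_Fsum: "Yop i (Fsum N z u c) n = (\<Sum>a<N. ?Y a / (u - z a))" for u
    by (simp add: Fsum_Yop[symmetric] Fsum_def Yop_commute)
  have "2 / (x - y) * (1 / (x - z i)) * Yop i (Fsum N z y c) n
       + 2 / (y - x) * (1 / (y - z i)) * Yop i (Fsum N z x c) n = (\<Sum>a<N. ?Y a * ?T a)"
    unfolding Yop_Fsum sum_distrib_left sum.distrib[symmetric]
    by (rule sum.cong[OF refl]) (simp add: algebra_simps)
  also have "\<dots> = ?Y i * ?T i + (\<Sum>a\<in>{..<N} - {i}. ?Y a * ?T a)"
    using assms(1) by (subst sum.remove[of _ i]) auto
  also have "?T i = 0"
    by (simp add: minus_diff_eq[of x y, symmetric] del: minus_diff_eq)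
  also have "(\<Sum>a\<in>{..<N} - {i}. ?Y a * ?T a) = (\<Sum>a\<in>{..<N} - {i}. ?Y a
          * (2 * (z a - z i) / ((x - z i) * (x - z a) * (y - z i) * (y - z a))))"
  proof (rule sum.cong[OF refl])
    fix a assume "a \<in> {..<N} - {i}"
    with assms have "x - z i \<noteq> 0" "x - z a \<noteq> 0" "y - z i \<noteq> 0" "y - z a \<noteq> 0" "x - y \<noteq> 0" "y - x \<noteq> 0"
      by auto
    then show "?Y a * ?T a = ?Y a * (2 * (z a - z i) / ((x - z i) * (x - z a) * (y - z i) * (y - z a)))"
      by (simp add: divide_simps) (simp add: algebra_simps)
  qed
  finally show ?thesis by simp
qed

definition Omega_excess_expansion ::
  "nat \<Rightarrow> (nat \<Rightarrow> complex) \<Rightarrow> (nat \<Rightarrow> complex) \<Rightarrow> (nat \<Rightarrow> complex) \<Rightarrow> nat \<Rightarrow> nat set \<Rightarrow> vec" where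
  "Omega_excess_expansion N k z w i S = (\<lambda>n.
     (\<Sum>p\<in>S. \<Sum>j\<in>{..<N} - {i}. (k i * Yop j (Fprod_on N z w (S - {p})) n - k j * Yop i (Fprod_on N z w (S - {p})) n)
                                  / ((w p - z i) * (w p - z j)))
   + (\<Sum>p\<in>S. (\<Sum>q\<in>S - {p}. 2 / (w p - w q)) * Yop i (Fprod_on N z w (S - {p})) n / (w p - z i)))"

lemma Omega_excess_expansion_insert:
  assumes "finite S" "p \<notin> S"
  shows "Omega_excess_expansion N k z w i (insert p S) n
     = Fsum N z (w p) (Omega_excess_expansion N k z w i S) n
       + (\<Sum>j\<in>{..<N} - {i}. (k i * Yop j (Fprod_on N z w S) n - k j * Yop i (Fprod_on N z w S) n)
                               / ((w p - z i) * (w p - z j)))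
       + (\<Sum>q\<in>S. 2 / (w p - w q) * (1 / (w p - z i)) * Yop i (Fprod_on N z w S) n
                + 2 / (w q - w p) * (1 / (w q - z i)) * Yop i (Fsum N z (w p) (Fprod_on N z w (S - {q}))) n)"
proof -
  let ?J = "{..<N} - {i}"
  let ?U = "Fprod_on N z w S"
  let ?V = "\<lambda>q. Fsum N z (w p) (Fprod_on N z w (S - {q}))"
  let ?B = "\<lambda>q c. \<Sum>j\<in>?J. (k i * Yop j c n - k j * Yop i c n) / ((w q - z i) * (w q - z j))"
  have inner: "(\<Sum>q\<in>insert p S - {r}. 2 / (w r - w q)) = 2 / (w r - w p) + (\<Sum>q\<in>S - {r}. 2 / (w r - w q))"
    if "r \<in> S" for r
  proof -
    have "insert p S - {r} = insert p (S - {r})" using assms that by auto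
    then show ?thesis using assms by simp
  qed
  have "insert p S - {p} = S" using assms(2) by auto
  then have expansion_insert: "Omega_excess_expansion N k z w i (insert p S) n
      = (?B p ?U + (\<Sum>r\<in>S. ?B r (?V r)))
        + ((\<Sum>q\<in>S. 2 / (w p - w q)) * Yop i ?U n / (w p - z i)
           + (\<Sum>r\<in>S. (2 / (w r - w p) + (\<Sum>q\<in>S - {r}. 2 / (w r - w q))) * Yop i (?V r) n / (w r - z i)))"
    using assms by (simp add: Omega_excess_expansion_def Fprod_on_insert_remove inner cong: sum.cong)
  have Fsum_expansion: "Fsum N z (w p) (Omega_excess_expansion N k z w i S) n
      = (\<Sum>r\<in>S. ?B r (?V r)) + (\<Sum>r\<in>S. (\<Sum>q\<in>S - {r}. 2 / (w r - w q)) * Yop i (?V r) n / (w r - z i))"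
    by (simp add: Omega_excess_expansion_def Fsum_Yop)
  have "(\<Sum>q\<in>S. 2 / (w p - w q)) * Yop i ?U n / (w p - z i)
      = (\<Sum>q\<in>S. 2 / (w p - w q) * (1 / (w p - z i)) * Yop i ?U n)"
    by (simp add: sum_distrib_right sum_divide_distrib)
  moreover have "(\<Sum>r\<in>S. (2 / (w r - w p) + (\<Sum>q\<in>S - {r}. 2 / (w r - w q))) * Yop i (?V r) n / (w r - z i))
      = (\<Sum>r\<in>S. 2 / (w r - w p) * (1 / (w r - z i)) * Yop i (?V r) n)
        + (\<Sum>r\<in>S. (\<Sum>q\<in>S - {r}. 2 / (w r - w q)) * Yop i (?V r) n / (w r - z i))"
    by (simp add: sum.distrib[symmetric] distrib_right add_divide_distrib)
  ultimately show ?thesis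
    unfolding expansion_insert Fsum_expansion sum.distrib
    by (simp only: add.assoc add.commute add.left_commute)
qed

lemma Omega_excess_Fprod_on:
  assumes "finite S" "i < N" "\<forall>j<N. j \<noteq> i \<longrightarrow> z j \<noteq> z i"
    and "\<forall>p\<in>S. \<forall>a<N. w p \<noteq> z a" "inj_on w S"
  shows "Omega_excess N k z i (Fprod_on N z w S) = Omega_excess_expansion N k z w i S"
  using assms(1,4,5)
proof (induction S rule: finite_induct)
  case empty
  show ?case by (simp add: Omega_excess_def Omega_excess_expansion_def Omega_hw_vec fun_eq_iff)
next
  case (insert p S)
  let ?J = "{..<N} - {i}"
  let ?U = "Fprod_on N z w S"
  let ?P = "\<lambda>q. Fprod_on N z w (S - {q})"
  let ?R = "\<lambda>j q. 2 * (z j - z i) / ((w p - z i) * (w p - z j) * (w q - z i) * (w q - z j))"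
  have IH: "Omega_excess N k z i ?U = Omega_excess_expansion N k z w i S"
    using insert by (auto simp: inj_on_insert)
  have wp: "\<forall>a<N. w p \<noteq> z a" using insert.prems(1) by auto
  show ?case
  proof (rule ext)
    fix n
    let ?Y = "\<lambda>j q. Yop j (Yop i (?P q)) n"
    have commutator_term: "(Hop k i (Yop j ?U) n - Yop i (Hop k j ?U) n) / ((w p - z i) * (w p - z j))
        = (k i * Yop j ?U n - k j * Yop i ?U n) / ((w p - z i) * (w p - z j)) + (\<Sum>q\<in>S. ?Y j q * ?R j q)"
      if "j \<in> ?J" for j
      using that wp insert.prems(1) assms(2)
      by (intro Hop_Yop_commutator_Fprod_on[OF insert.hyps(1)]) auto
    have pair_term: "(\<Sum>a\<in>?J. ?Y a q * ?R a q)
        = 2 / (w p - w q) * (1 / (w p - z i)) * Yop i ?U n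
          + 2 / (w q - w p) * (1 / (w q - z i)) * Yop i (Fsum N z (w p) (?P q)) n"
      if q: "q \<in> S" for q
    proof -
      have "w p \<noteq> w q" using insert.prems(2) insert.hyps(2) q by (auto simp: inj_on_def)
      moreover have "\<forall>a<N. w p \<noteq> z a \<and> w q \<noteq> z a" using insert.prems(1) q by auto
      ultimately show ?thesis
        using Yop_Fsum_pair[OF assms(2), of "w p" "w q" z "?P q" n] Fprod_on_remove[OF insert.hyps(1) q]
        by simp
    qed
    have swapped: "(\<Sum>j\<in>?J. \<Sum>q\<in>S. ?Y j q * ?R j q)
        = (\<Sum>q\<in>S. 2 / (w p - w q) * (1 / (w p - z i)) * Yop i ?U n
                  + 2 / (w q - w p) * (1 / (w q - z i)) * Yop i (Fsum N z (w p) (?P q)) n)"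
      by (subst sum.swap) (rule sum.cong[OF refl pair_term])
    have "Omega_excess N k z i (Fprod_on N z w (insert p S)) n
        = Fsum N z (w p) (Omega_excess_expansion N k z w i S) n
          + (\<Sum>j\<in>?J. (k i * Yop j ?U n - k j * Yop i ?U n) / ((w p - z i) * (w p - z j)))
          + (\<Sum>j\<in>?J. \<Sum>q\<in>S. ?Y j q * ?R j q)"
      using insert.hyps assms(2,3) wp
      by (simp add: Fprod_on_insert Omega_excess_Fsum IH commutator_term sum.distrib)
    also have "\<dots> = Fsum N z (w p) (Omega_excess_expansion N k z w i S) n
          + (\<Sum>j\<in>?J. (k i * Yop j ?U n - k j * Yop i ?U n) / ((w p - z i) * (w p - z j)))
          + (\<Sum>q\<in>S. 2 / (w p - w q) * (1 / (w p - z i)) * Yop i ?U n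
                  + 2 / (w q - w p) * (1 / (w q - z i)) * Yop i (Fsum N z (w p) (?P q)) n)"
      unfolding swapped ..
    also have "\<dots> = Omega_excess_expansion N k z w i (insert p S) n"
      using insert.hyps by (rule Omega_excess_expansion_insert[symmetric])
    finally show "Omega_excess N k z i (Fprod_on N z w (insert p S)) n
        = Omega_excess_expansion N k z w i (insert p S) n" .
  qed
qed

lemma pole_times_Fprod_on:
  assumes "finite S" "p \<in> S" "i < N"
  shows "k i / (w p - z i) * Fprod_on N z w S n =
     (\<Sum>j\<in>{..<N} - {i}. (k i * Yop j (Fprod_on N z w (S - {p})) n - k j * Yop i (Fprod_on N z w (S - {p})) n)
                           / ((w p - z i) * (w p - z j)))
     + (\<Sum>a<N. k a / (w p - z a)) * (Yop i (Fprod_on N z w (S - {p})) n / (w p - z i))"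
proof -
  let ?J = "{..<N} - {i}"
  let ?Y = "\<lambda>a. Yop a (Fprod_on N z w (S - {p})) n"
  have U: "Fprod_on N z w S n = ?Y i / (w p - z i) + (\<Sum>a\<in>?J. ?Y a / (w p - z a))"
    using Fprod_on_remove[OF assms(1,2)] assms(3) by (simp add: Fsum_def sum.remove[of "{..<N}" i])
  have K: "(\<Sum>a<N. k a / (w p - z a)) = k i / (w p - z i) + (\<Sum>a\<in>?J. k a / (w p - z a))"
    using assms(3) by (simp add: sum.remove[of "{..<N}" i])
  have "(\<Sum>a\<in>?J. k i / (w p - z i) * (?Y a / (w p - z a))) =
     (\<Sum>a\<in>?J. (k i * ?Y a - k a * ?Y i) / ((w p - z i) * (w p - z a)) + k a / (w p - z a) * (?Y i / (w p - z i)))"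
    by (rule sum.cong[OF refl]) (simp add: diff_divide_distrib)
  then show ?thesis unfolding U K distrib_left distrib_right sum_distrib_left sum_distrib_right sum.distrib
    by (simp only: add.assoc add.commute add.left_commute)
qed

text \<open>The coefficient of the last sum is \<open>b\<^sup>2\<close> times the logarithmic \<open>w\<^sub>p\<close>-derivative of the
  master function.\<close>
lemma KZ_integrand_identity:
  assumes "finite S" "i < N" "\<forall>j<N. j \<noteq> i \<longrightarrow> z j \<noteq> z i"
    and "\<forall>p\<in>S. \<forall>a<N. w p \<noteq> z a" "inj_on w S"
  shows "(\<Sum>p\<in>S. k i / (w p - z i)) * Fprod_on N z w S n =
     Lam / 2 * (Hop k i (Fprod_on N z w S) n - k i * Fprod_on N z w S n)
     + Omega_excess N k z i (Fprod_on N z w S) n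
     + (\<Sum>p\<in>S. (Lam + (\<Sum>a<N. k a / (w p - z a)) - (\<Sum>q\<in>S - {p}. 2 / (w p - w q)))
          * (Yop i (Fprod_on N z w (S - {p})) n / (w p - z i)))"
proof -
  let ?X = "\<lambda>p. Yop i (Fprod_on N z w (S - {p})) n / (w p - z i)"
  let ?B = "\<lambda>p. \<Sum>j\<in>{..<N} - {i}. (k i * Yop j (Fprod_on N z w (S - {p})) n - k j * Yop i (Fprod_on N z w (S - {p})) n)
                                     / ((w p - z i) * (w p - z j))"
  let ?A = "\<lambda>p. \<Sum>a<N. k a / (w p - z a)"
  let ?Q = "\<lambda>p. \<Sum>q\<in>S - {p}. 2 / (w p - w q)"
  have H: "Hop k i (Fprod_on N z w S) n - k i * Fprod_on N z w S n = (\<Sum>p\<in>S. -2 * ?X p)"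
    using Hop_Fprod_on[OF assms(1,2)] by (simp add: sum_distrib_left sum_negf)
  have Omega: "Omega_excess N k z i (Fprod_on N z w S) n = (\<Sum>p\<in>S. ?B p) + (\<Sum>p\<in>S. ?Q p * ?X p)"
    using Omega_excess_Fprod_on[OF assms] by (simp add: Omega_excess_expansion_def)
  have pole: "(\<Sum>p\<in>S. k i / (w p - z i)) * Fprod_on N z w S n = (\<Sum>p\<in>S. ?B p + ?A p * ?X p)"
    unfolding sum_distrib_right[of _ S "Fprod_on N z w S n"]
    by (rule sum.cong[OF refl]) (rule pole_times_Fprod_on[OF assms(1) _ assms(2)])
  show ?thesis
    unfolding H Omega pole sum_distrib_left sum.distrib[symmetric] by (intro sum.cong refl) (simp add: algebra_simps add_divide_distrib)
qed

section \<open>Derivatives of the integrand\<close>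

lemma has_field_derivative_Yop:
  assumes "\<And>n. ((\<lambda>t. c t n) has_field_derivative c' n) F"
  shows "((\<lambda>t. Yop a (c t) n) has_field_derivative Yop a c' n) F"
  using assms by (simp add: Yop_def)

lemma Fsum_has_field_derivative_z:
  assumes "\<And>n. ((\<lambda>t. c t n) has_field_derivative c' n) (at (z i))"
    and "\<forall>a<N. x \<noteq> z a" "i < N"
  shows "((\<lambda>t. Fsum N (z(i := t)) x (c t) n) has_field_derivative
     Fsum N z x c' n + Yop i (c (z i)) n / (x - z i)^2) (at (z i))"
proof -
  have "((\<lambda>t. Yop a (c t) n / (x - (z(i := t)) a)) has_field_derivative
      Yop a c' n / (x - z a) + (if a = i then Yop i (c (z i)) n / (x - z i)^2 else 0)) (at (z i))"
    if "a < N" for a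
  proof -
    have nz: "x - z a \<noteq> 0" using assms(2) that by auto
    have "((\<lambda>t. x - (z(i := t)) a) has_field_derivative (if a = i then -1 else 0)) (at (z i))"
      by (cases "a = i") (auto intro!: derivative_eq_intros)
    from DERIV_divide[OF has_field_derivative_Yop[of c c', OF assms(1)] this]
    have "((\<lambda>t. Yop a (c t) n / (x - (z(i := t)) a)) has_field_derivative
        (Yop a c' n * (x - z a) - Yop a (c (z i)) n * (if a = i then -1 else 0)) / ((x - z a) * (x - z a)))
        (at (z i))"
      using nz by simp
    moreover have "(Yop a c' n * (x - z a) - Yop a (c (z i)) n * (if a = i then -1 else 0)) / ((x - z a) * (x - z a))
        = Yop a c' n / (x - z a) + (if a = i then Yop i (c (z i)) n / (x - z i)^2 else 0)"
    proof -
      have "(A * y - B * e) / (y * y) = A / y - e * (B / y^2)" if "y \<noteq> 0" for y A B e :: complex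
        using that by (simp add: field_simps power2_eq_square)
      then show ?thesis using nz by simp
    qed
    ultimately show ?thesis by simp
  qed
  then have "((\<lambda>t. \<Sum>a<N. Yop a (c t) n / (x - (z(i := t)) a)) has_field_derivative
      (\<Sum>a<N. Yop a c' n / (x - z a) + (if a = i then Yop i (c (z i)) n / (x - z i)^2 else 0))) (at (z i))"
    by (intro DERIV_sum) simp
  then show ?thesis
    using assms(3) by (simp add: Fsum_def sum.distrib)
qed

lemma Fprod_on_has_field_derivative_z:
  assumes "finite S" "\<forall>p\<in>S. \<forall>a<N. w p \<noteq> z a" "i < N"
  shows "((\<lambda>t. Fprod_on N (z(i := t)) w S n) has_field_derivative
     (\<Sum>p\<in>S. Yop i (Fprod_on N z w (S - {p})) n / (w p - z i)^2)) (at (z i))"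
  using assms(1,2)
proof (induction S arbitrary: n rule: finite_induct)
  case empty
  then show ?case by simp
next
  case (insert p S)
  let ?D = "\<lambda>n. \<Sum>q\<in>S. Yop i (Fprod_on N z w (S - {q})) n / (w q - z i)^2"
  have "((\<lambda>t. Fprod_on N (z(i := t)) w S n) has_field_derivative ?D n) (at (z i))" for n
    using insert by blast
  from Fsum_has_field_derivative_z[of "\<lambda>t. Fprod_on N (z(i := t)) w S" ?D z i, OF this _ assms(3), of "w p"]
  have "((\<lambda>t. Fsum N (z(i := t)) (w p) (Fprod_on N (z(i := t)) w S) n) has_field_derivative
      Fsum N z (w p) ?D n + Yop i (Fprod_on N z w S) n / (w p - z i)^2) (at (z i))"
    using insert.prems by simp
  moreover have "Fsum N z (w p) ?D n
      = (\<Sum>q\<in>S. Yop i (Fprod_on N z w (insert p S - {q})) n / (w q - z i)^2)"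
    using insert.hyps by (simp add: Fsum_Yop Fprod_on_insert_remove cong: sum.cong)
  moreover have "insert p S - {p} = S"
    using insert.hyps by auto
  ultimately show ?case
    using insert.hyps by (simp add: Fprod_on_insert add.commute fun_upd_def)
qed

lemma ratfunz_sum:
  "finite A \<Longrightarrow> (\<And>x. x \<in> A \<Longrightarrow> f x \<in> ratfunz N m) \<Longrightarrow> (\<lambda>z w. \<Sum>x\<in>A. f x z w) \<in> ratfunz N m"
  by (induction A rule: finite_induct) (auto intro: ratfunz.intros ratfunz.const[of 0, simplified])

lemma Fprod_on_ratfunz:
  assumes "finite S" "S \<subseteq> {..<m}"
  shows "(\<lambda>z w. Fprod_on N z w S n) \<in> ratfunz N m"
  using assms
proof (induction S arbitrary: n rule: finite_induct)
  case empty
  then show ?case using ratfunz.const[of "hw_vec n"] by simp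
next
  case (insert p S)
  have "(\<lambda>z w. Fprod_on N z w (insert p S) n)
      = (\<lambda>z w. \<Sum>a<N. Yop a (Fprod_on N z w S) n * (1 / (w p - z a)))"
    using insert.hyps by (simp add: Fprod_on_insert Fsum_def fun_eq_iff)
  also have "\<dots> \<in> ratfunz N m"
  proof (rule ratfunz_sum)
    fix a assume "a \<in> {..<N}"
    show "(\<lambda>z w. Yop a (Fprod_on N z w S) n * (1 / (w p - z a))) \<in> ratfunz N m"
    proof (cases "n a = 0")
      case True
      then show ?thesis using ratfunz.const[of 0] by (simp add: Yop_def)
    next
      case False
      then have "(\<lambda>z w. Yop a (Fprod_on N z w S) n) \<in> ratfunz N m"
        using insert by (simp add: Yop_def)
      then show ?thesis
        by (rule ratfunz.mult) (use insert \<open>a \<in> {..<N}\<close> in \<open>auto intro: ratfunz.pole\<close>)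
    qed
  qed simp
  finally show ?case .
qed

lemma ratfunz_imp_ratfun: "f \<in> ratfunz N m \<Longrightarrow> (\<lambda>w. f z w) \<in> ratfun N m z"
  by (induction rule: ratfunz.induct) (auto intro: ratfun.intros)

definition pole_term :: "nat \<Rightarrow> nat \<Rightarrow> (nat \<Rightarrow> complex) \<Rightarrow> nat \<Rightarrow> nat \<Rightarrow> (nat \<Rightarrow> nat) \<Rightarrow> (nat \<Rightarrow> complex) \<Rightarrow> complex" where
  "pole_term N m z i p n w = Yop i (Fprod_on N z w ({..<m} - {p})) n / (w p - z i)"

lemma pole_term_ratfun:
  assumes "p < m" "i < N"
  shows "pole_term N m z i p n \<in> ratfun N m z"
proof -
  have "(\<lambda>z w. Yop i (Fprod_on N z w ({..<m} - {p})) n * (1 / (w p - z i))) \<in> ratfunz N m"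
  proof (cases "n i = 0")
    case True
    then show ?thesis using ratfunz.const[of 0] by (simp add: Yop_def)
  next
    case False
    then have "(\<lambda>z w. Yop i (Fprod_on N z w ({..<m} - {p})) n) \<in> ratfunz N m"
      by (simp add: Yop_def Fprod_on_ratfunz)
    then show ?thesis
      by (rule ratfunz.mult) (use assms in \<open>auto intro: ratfunz.pole\<close>)
  qed
  from ratfunz_imp_ratfun[OF this, of z] show ?thesis
    by (simp add: pole_term_def[abs_def])
qed

lemma pd_z_Phi_Fprod:
  assumes "master_branch N m k b Lam Zs G Phi" "z \<in> Zs" "w \<in> G" "i < N" "b \<noteq> 0"
  shows "- (b^2) * pd i (\<lambda>z'. Phi z' w * Fprod N m z' w n) z
     = Phi z w * ((\<Sum>p<m. k i / (w p - z i)) * Fprod N m z w n)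
       - b^2 * (Phi z w * (\<Sum>p<m. Yop i (Fprod_on N z w ({..<m} - {p})) n / (w p - z i)^2))"
proof -
  have "((\<lambda>t. Phi (z(i := t)) w) has_field_derivative Phi z w * (- (\<Sum>p<m. k i / (b^2 * (w p - z i)))))
      (at (z i))"
    and "\<forall>p\<in>{..<m}. \<forall>a<N. w p \<noteq> z a"
    using assms unfolding master_branch_def by auto
  from DERIV_mult'[OF this(1) Fprod_on_has_field_derivative_z[OF _ this(2) assms(4)]]
  have "((\<lambda>t. Phi (z(i := t)) w * Fprod_on N (z(i := t)) w {..<m} n) has_field_derivative
      Phi z w * (\<Sum>p<m. Yop i (Fprod_on N z w ({..<m} - {p})) n / (w p - z i)^2)
       - Phi z w * (\<Sum>p<m. k i / (b^2 * (w p - z i))) * Fprod N m z w n) (at (z i))"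
    by (simp add: Fprod_eq_Fprod_on algebra_simps)
  then have pd_eq: "pd i (\<lambda>z'. Phi z' w * Fprod N m z' w n) z
      = Phi z w * (\<Sum>p<m. Yop i (Fprod_on N z w ({..<m} - {p})) n / (w p - z i)^2)
        - Phi z w * (\<Sum>p<m. k i / (b^2 * (w p - z i))) * Fprod N m z w n"
    unfolding pd_def Fprod_eq_Fprod_on by (rule DERIV_imp_deriv)
  have scale: "b^2 * (\<Sum>p<m. k i / (b^2 * (w p - z i))) = (\<Sum>p<m. k i / (w p - z i))"
    using assms(5) by (simp add: sum_distrib_left)
  have "- B * (P * D - P * S * U) = P * ((B * S) * U) - B * (P * D)" for B P D S U :: complex
    by (simp add: algebra_simps)
  then show ?thesis
    unfolding pd_eq scale[symmetric] .
qed

lemma pd_w_Phi_pole_term: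
  assumes "master_branch N m k b Lam Zs G Phi" "z \<in> Zs" "w \<in> G" "i < N" "p < m" "b \<noteq> 0"
  shows "b^2 * pd p (\<lambda>w'. Phi z w' * pole_term N m z i p n w') w
     = Phi z w * ((Lam + (\<Sum>a<N. k a / (w p - z a)) - (\<Sum>q\<in>{..<m} - {p}. 2 / (w p - w q)))
                  * pole_term N m z i p n w)
       - b^2 * (Phi z w * (Yop i (Fprod_on N z w ({..<m} - {p})) n / (w p - z i)^2))"
proof -
  define Y where "Y = Yop i (Fprod_on N z w ({..<m} - {p})) n"
  define A where "A = Lam / b^2 + (\<Sum>a<N. k a / (b^2 * (w p - z a)))
                      - (\<Sum>q\<in>{..<m} - {p}. 2 / (b^2 * (w p - w q)))"
  have Phi_deriv: "((\<lambda>t. Phi z (w(p := t))) has_field_derivative Phi z w * A) (at (w p))"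
    and "w p \<noteq> z i"
    using assms unfolding master_branch_def A_def by auto
  have pole_upd: "pole_term N m z i p n (w(p := t)) = Y / (t - z i)" for t
  proof -
    have "Fprod_on N z (w(p := t)) ({..<m} - {p}) = Fprod_on N z w ({..<m} - {p})"
      by (rule Fprod_on_cong) auto
    then show ?thesis by (simp add: pole_term_def Y_def)
  qed
  have "((\<lambda>t. Y / (t - z i)) has_field_derivative - (Y / (w p - z i)^2)) (at (w p))"
    using \<open>w p \<noteq> z i\<close> by (auto intro!: derivative_eq_intros simp: power2_eq_square)
  from DERIV_mult'[OF Phi_deriv this]
  have "((\<lambda>t. Phi z (w(p := t)) * pole_term N m z i p n (w(p := t))) has_field_derivative
      Phi z w * A * pole_term N m z i p n w - Phi z w * (Y / (w p - z i)^2)) (at (w p))"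
    using pole_upd[of "w p"] by (simp add: pole_upd algebra_simps)
  then have pd_eq: "pd p (\<lambda>w'. Phi z w' * pole_term N m z i p n w') w
      = Phi z w * A * pole_term N m z i p n w - Phi z w * (Y / (w p - z i)^2)"
    unfolding pd_def by (rule DERIV_imp_deriv)
  have unscale: "b^2 * (c / (b^2 * x)) = c / x" for c x
    using assms(6) by simp
  have distrib: "c * (x + y - u) = c * x + c * y - c * u" for c x y u :: complex
    by (simp add: algebra_simps)
  have scale: "b^2 * A = Lam + (\<Sum>a<N. k a / (w p - z a)) - (\<Sum>q\<in>{..<m} - {p}. 2 / (w p - w q))"
    unfolding A_def distrib sum_distrib_left unscale using assms(6) by simp
  have "B * (P * c * X - P * X') = P * ((B * c) * X) - B * (P * X')" for B P c X X' :: complex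
    by (simp add: algebra_simps)
  then show ?thesis
    unfolding pd_eq scale[symmetric] Y_def .
qed

lemma KZ_modulo_total_w_derivatives:
  assumes "master_branch N m k b Lam Zs G Phi" "z \<in> Zs" "w \<in> G" "i < N"
    and "b \<noteq> 0" "\<forall>j<N. j \<noteq> i \<longrightarrow> z j \<noteq> z i"
  shows "- (b^2) * pd i (\<lambda>z'. Phi z' w * Fprod N m z' w n) z
     = Phi z w * (Lam / 2 * (Hop k i (Fprod N m z w) n - k i * Fprod N m z w n)
                  + Omega_excess N k z i (Fprod N m z w) n)
       + b^2 * (\<Sum>p<m. pd p (\<lambda>w'. Phi z w' * pole_term N m z i p n w') w)"
proof -
  let ?U = "Fprod N m z w n"
  let ?A = "\<lambda>p. Lam + (\<Sum>a<N. k a / (w p - z a)) - (\<Sum>q\<in>{..<m} - {p}. 2 / (w p - w q))"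
  let ?D = "\<Sum>p<m. Yop i (Fprod_on N z w ({..<m} - {p})) n / (w p - z i)^2"
  have wz: "\<forall>p\<in>{..<m}. \<forall>a<N. w p \<noteq> z a" and "\<forall>p<m. \<forall>q<m. p \<noteq> q \<longrightarrow> w p \<noteq> w q"
    using assms(1-3) unfolding master_branch_def by auto
  then have inj: "inj_on w {..<m}"
    unfolding inj_on_def by blast
  have "- (b^2) * pd i (\<lambda>z'. Phi z' w * Fprod N m z' w n) z
      = Phi z w * ((\<Sum>p<m. k i / (w p - z i)) * ?U) - b^2 * (Phi z w * ?D)"
    by (rule pd_z_Phi_Fprod[OF assms(1-5)])
  also have "(\<Sum>p<m. k i / (w p - z i)) * ?U
      = Lam / 2 * (Hop k i (Fprod N m z w) n - k i * ?U) + Omega_excess N k z i (Fprod N m z w) n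
        + (\<Sum>p<m. ?A p * pole_term N m z i p n w)"
    using KZ_integrand_identity[OF _ assms(4,6) wz inj, of k n Lam]
    by (simp add: Fprod_eq_Fprod_on pole_term_def)
  also have "b^2 * (Phi z w * ?D)
      = Phi z w * (\<Sum>p<m. ?A p * pole_term N m z i p n w)
        - b^2 * (\<Sum>p<m. pd p (\<lambda>w'. Phi z w' * pole_term N m z i p n w') w)"
    using pd_w_Phi_pole_term[OF assms(1-4) _ assms(5)]
    by (simp add: sum_distrib_left sum_subtractf)
  finally show ?thesis by (simp add: algebra_simps)
qed

lemma phi0_branch_has_field_derivative:
  assumes "phi0_branch N k b Lam Zs phi0" "z \<in> Zs" "i < N"
  shows "((\<lambda>t. phi0 (z(i := t))) has_field_derivative
     - phi0 z * (Lam * k i / 2 + (\<Sum>j\<in>{..<N} - {i}. k i * k j / (2 * (z i - z j)))) / b^2) (at (z i))"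
proof -
  have "((\<lambda>t. phi0 (z(i := t))) has_field_derivative
      phi0 z * (- Lam * k i / (2 * b^2) - (\<Sum>j\<in>{..<N} - {i}. k i * k j / (2 * b^2 * (z i - z j)))))
      (at (z i))"
    using assms unfolding phi0_branch_def by blast
  moreover have "(\<Sum>j\<in>{..<N} - {i}. k i * k j / (2 * b^2 * (z i - z j)))
      = (\<Sum>j\<in>{..<N} - {i}. k i * k j / (2 * (z i - z j))) / b^2"
    unfolding sum_divide_distrib by (rule sum.cong) (simp_all add: mult_ac)
  moreover have "(- M) * K / (2 * B) - X / B = - (M * K / 2 + X) / B" for M K X B :: complex
    by (cases "B = 0") (simp_all add: field_simps)
  moreover have "P * (- A - X) / B = - (P * (A + X) / B)" for P A X B :: complex
    by (simp add: algebra_simps minus_divide_left)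
  ultimately show ?thesis
    by simp
qed

section \<open>Integration over an admissible cycle\<close>

locale admissible_integral =
  fixes N m :: nat and Zs G :: "(nat \<Rightarrow> complex) set"
    and Phi :: "(nat \<Rightarrow> complex) \<Rightarrow> (nat \<Rightarrow> complex) \<Rightarrow> complex"
    and intg :: "((nat \<Rightarrow> complex) \<Rightarrow> complex) \<Rightarrow> complex"
  assumes admissible: "admissible_cycle N m Zs G Phi intg"
begin

lemma intg_add: "intg (\<lambda>w. f w + g w) = intg f + intg g"
  using admissible unfolding admissible_cycle_def by blast

lemma intg_scale: "intg (\<lambda>w. c * f w) = c * intg f"
  using admissible unfolding admissible_cycle_def by blast

lemma intg_cong: "(\<And>w. w \<in> G \<Longrightarrow> f w = g w) \<Longrightarrow> intg f = intg g"
  using admissible unfolding admissible_cycle_def by blast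

lemma intg_zero: "intg (\<lambda>w. 0) = 0"
  using intg_scale[of 0 "\<lambda>w. 0"] by simp

lemma intg_sum: "intg (\<lambda>w. \<Sum>x\<in>A. f x w) = (\<Sum>x\<in>A. intg (f x))"
  by (induction A rule: infinite_finite_induct) (simp_all add: intg_zero intg_add)

lemma intg_div: "intg (\<lambda>w. f w / d) = intg f / d"
  using intg_scale[of "1/d" f] by simp

lemma intg_Hop: "Hop k a (\<lambda>n. intg (\<lambda>w. f w n)) = (\<lambda>n. intg (\<lambda>w. Hop k a (f w) n))"
  by (simp add: Hop_def intg_scale)

lemma intg_Omega: "Omega k i j (\<lambda>n. intg (\<lambda>w. f w n)) n = intg (\<lambda>w. Omega k i j (f w) n)"
proof -
  have "Yop a (\<lambda>n. intg (\<lambda>w. f w n)) = (\<lambda>n. intg (\<lambda>w. Yop a (f w) n))" for a f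
    by (simp add: Yop_def intg_zero fun_eq_iff)
  moreover have "Xop k a (\<lambda>n. intg (\<lambda>w. f w n)) = (\<lambda>n. intg (\<lambda>w. Xop k a (f w) n))" for a f
    by (simp add: Xop_def intg_scale)
  ultimately show ?thesis
    by (simp add: Omega_def intg_Hop intg_add intg_scale intg_div)
qed

lemma intg_KZ_operator:
  "Lam / 2 * Hop k i (\<lambda>n. intg (\<lambda>w. f w n)) n + (\<Sum>j\<in>A. Omega k i j (\<lambda>n. intg (\<lambda>w. f w n)) n / d j)
   = intg (\<lambda>w. Lam / 2 * Hop k i (f w) n + (\<Sum>j\<in>A. Omega k i j (f w) n / d j))"
  by (simp add: intg_Hop intg_Omega intg_add intg_scale intg_sum intg_div)

lemma intg_has_field_derivative_z:
  assumes "R \<in> ratfunz N m" "z \<in> Zs" "i < N"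
  shows "((\<lambda>t. intg (\<lambda>w. Phi (z(i := t)) w * R (z(i := t)) w)) has_field_derivative
     intg (\<lambda>w. pd i (\<lambda>z'. Phi z' w * R z' w) z)) (at (z i))"
  using admissible assms unfolding admissible_cycle_def by blast

lemma intg_pd_w_eq_0:
  assumes "z \<in> Zs" "R \<in> ratfun N m z" "p < m"
  shows "intg (\<lambda>w. pd p (\<lambda>w'. Phi z w' * R w') w) = 0"
  using admissible assms unfolding admissible_cycle_def by blast

lemma intg_KZ:
  assumes "master_branch N m k b Lam Zs G Phi" "z \<in> Zs" "i < N"
    and "b \<noteq> 0" "\<forall>j<N. j \<noteq> i \<longrightarrow> z j \<noteq> z i"
  shows "- (b^2) * intg (\<lambda>w. pd i (\<lambda>z'. Phi z' w * Fprod N m z' w n) z)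
     = intg (\<lambda>w. Phi z w * (Lam / 2 * (Hop k i (Fprod N m z w) n - k i * Fprod N m z w n)
                             + Omega_excess N k z i (Fprod N m z w) n))"
proof -
  have "intg (\<lambda>w. pd p (\<lambda>w'. Phi z w' * pole_term N m z i p n w') w) = 0" if "p < m" for p
    using intg_pd_w_eq_0[OF assms(2) pole_term_ratfun[OF that assms(3)] that] .
  then have "- (b^2) * intg (\<lambda>w. pd i (\<lambda>z'. Phi z' w * Fprod N m z' w n) z)
     = intg (\<lambda>w. Phi z w * (Lam / 2 * (Hop k i (Fprod N m z w) n - k i * Fprod N m z w n)
                             + Omega_excess N k z i (Fprod N m z w) n)
                 + b^2 * (\<Sum>p<m. pd p (\<lambda>w'. Phi z w' * pole_term N m z i p n w') w))"
    by (subst intg_scale[symmetric], intro intg_cong) (rule KZ_modulo_total_w_derivatives[OF assms(1,2) _ assms(3-5)])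
  also have "\<dots> = intg (\<lambda>w. Phi z w * (Lam / 2 * (Hop k i (Fprod N m z w) n - k i * Fprod N m z w n)
                             + Omega_excess N k z i (Fprod N m z w) n))"
    by (simp add: intg_add intg_scale intg_sum \<open>\<And>p. p < m \<Longrightarrow> _ = 0\<close>)
  finally show ?thesis .
qed

lemma intg_KZ_scaled:
  assumes "master_branch N m k b Lam Zs G Phi" "z \<in> Zs" "i < N"
    and "b \<noteq> 0" "\<forall>j<N. j \<noteq> i \<longrightarrow> z j \<noteq> z i"
  defines "c \<equiv> Lam * k i / 2 + (\<Sum>j\<in>{..<N} - {i}. k i * k j / (2 * (z i - z j)))"
  shows "- (b^2) * (P * intg (\<lambda>w. pd i (\<lambda>z'. Phi z' w * Fprod N m z' w n) z)
                    - P * c / b^2 * intg (\<lambda>w. Phi z w * Fprod N m z w n))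
     = Lam / 2 * Hop k i (\<lambda>n. intg (\<lambda>w. P * Phi z w * Fprod N m z w n)) n
       + (\<Sum>j\<in>{..<N} - {i}. Omega k i j (\<lambda>n. intg (\<lambda>w. P * Phi z w * Fprod N m z w n)) n / (z i - z j))"
proof -
  let ?U = "\<lambda>w. Fprod N m z w"
  have "- (b^2) * (P * intg (\<lambda>w. pd i (\<lambda>z'. Phi z' w * Fprod N m z' w n) z)
                   - P * c / b^2 * intg (\<lambda>w. Phi z w * ?U w n))
      = P * (c * intg (\<lambda>w. Phi z w * ?U w n) + - (b^2) * intg (\<lambda>w. pd i (\<lambda>z'. Phi z' w * Fprod N m z' w n) z))"
    using assms(4) by (simp add: field_simps)
  also have "\<dots> = intg (\<lambda>w. P * Phi z w * (c * ?U w n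
          + (Lam / 2 * (Hop k i (?U w) n - k i * ?U w n) + Omega_excess N k z i (?U w) n)))"
    unfolding intg_KZ[OF assms(1-5)]
    by (simp add: intg_add[symmetric] intg_scale[symmetric] algebra_simps)
  also have "\<dots> = intg (\<lambda>w. P * Phi z w * (Lam / 2 * Hop k i (?U w) n
          + (\<Sum>j\<in>{..<N} - {i}. Omega k i j (?U w) n / (z i - z j))))"
    unfolding c_def KZ_operator_via_Omega_excess ..
  also have "\<dots> = Lam / 2 * Hop k i (\<lambda>n. intg (\<lambda>w. P * Phi z w * ?U w n)) n
       + (\<Sum>j\<in>{..<N} - {i}. Omega k i j (\<lambda>n. intg (\<lambda>w. P * Phi z w * ?U w n)) n / (z i - z j))"
    unfolding intg_KZ_operator by (simp add: algebra_simps sum_distrib_left)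
  finally show ?thesis .
qed

end

theorem theorem2:
  fixes N m :: nat and k :: "nat \<Rightarrow> complex" and b Lam :: complex
    and Zs G :: "(nat \<Rightarrow> complex) set"
    and phi0 :: "(nat \<Rightarrow> complex) \<Rightarrow> complex"
    and Phi :: "(nat \<Rightarrow> complex) \<Rightarrow> (nat \<Rightarrow> complex) \<Rightarrow> complex"
    and intg :: "((nat \<Rightarrow> complex) \<Rightarrow> complex) \<Rightarrow> complex"
    and z :: "nat \<Rightarrow> complex" and i :: nat
  assumes "N \<ge> 1" and "m \<ge> 1" and "b \<noteq> 0" and "open Zs"
    and "\<forall>z'\<in>Zs. \<forall>a<N. \<forall>c<N. a \<noteq> c \<longrightarrow> z' a \<noteq> z' c"
    and "phi0_branch N k b Lam Zs phi0"
    and "master_branch N m k b Lam Zs G Phi"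
    and "admissible_cycle N m Zs G Phi intg"
    and "z \<in> Zs" and "i < N"
  shows "\<forall>n. \<exists>D. ((\<lambda>t. Psi N m phi0 Phi intg (z(i := t)) n) has_field_derivative D) (at (z i)) \<and>
           - (b^2) * D = Lam / 2 * Hop k i (Psi N m phi0 Phi intg z) n
              + (\<Sum>j\<in>{..<N} - {i}. Omega k i j (Psi N m phi0 Phi intg z) n / (z i - z j))"
proof
  fix n
  interpret admissible_integral N m Zs G Phi intg
    using assms(8) by unfold_locales
  have "(\<lambda>z w. Fprod N m z w n) \<in> ratfunz N m"
    unfolding Fprod_eq_Fprod_on by (rule Fprod_on_ratfunz) auto
  from DERIV_mult'[OF phi0_branch_has_field_derivative[OF assms(6,9,10)]
                     intg_has_field_derivative_z[OF this assms(9,10)]]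
  have "((\<lambda>t. Psi N m phi0 Phi intg (z(i := t)) n) has_field_derivative
      phi0 z * intg (\<lambda>w. pd i (\<lambda>z'. Phi z' w * Fprod N m z' w n) z)
      - phi0 z * (Lam * k i / 2 + (\<Sum>j\<in>{..<N} - {i}. k i * k j / (2 * (z i - z j)))) / b^2
        * intg (\<lambda>w. Phi z w * Fprod N m z w n)) (at (z i))"
    unfolding Psi_def by simp
  moreover have "\<forall>j<N. j \<noteq> i \<longrightarrow> z j \<noteq> z i"
    using assms(5,9,10) by blast
  moreover have "Psi N m phi0 Phi intg z = (\<lambda>n. intg (\<lambda>w. phi0 z * Phi z w * Fprod N m z w n))"
    by (simp add: Psi_def intg_scale[symmetric] mult.assoc fun_eq_iff)
  ultimately show "\<exists>D. ((\<lambda>t. Psi N m phi0 Phi intg (z(i := t)) n) has_field_derivative D) (at (z i)) \<and>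
           - (b^2) * D = Lam / 2 * Hop k i (Psi N m phi0 Phi intg z) n
              + (\<Sum>j\<in>{..<N} - {i}. Omega k i j (Psi N m phi0 Phi intg z) n / (z i - z j))"
    using intg_KZ_scaled[OF assms(7,9,10,3)] by auto
qed

end
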